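(* Let $\psi:\Sigma\to\mathbb{H}^2\times\mathbb{R}\subset\mathbb{L}^4$ be a conformal immersion with regular vertical projection and constant mean curvature $1/2$ with respect to its canonical orientation, with induced metric $\lambda|dz|^2$, angle function $u>0$, unit normal $\eta$, vertical projection $N$, hyperbolic Gauss map $G$, and Abresch–Rosenberg differential $Q\,dz^2$ with $Q$ nowhere zero. Then $$\psi^\sharp=-\psi+\frac2u(G,1)=-\psi+\frac{2}{u^2}(\eta+N)$$ is a conformal immersion $\Sigma\to\mathbb{H}^2\times\mathbb{R}$ with regular vertical projection and constant mean curvature $1/2$ with respect to its canonical orientation; its hyperbolic Gauss map is $G$, its angle function is $u$, and its metric is $\lambda^\sharp|dz|^2$ with $\lambda^\sharp=\frac{16|Q|^2}{\lambda u^4}$.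
   Context: $\mathbb{L}^4=(\mathbb{R}^4,\langle,\rangle=-dx_0^2+dx_1^2+dx_2^2+dx_3^2)$, $\mathbb{H}^2=\{x\in\mathbb{L}^3:\langle x,x\rangle=-1,x_0>0\}$ in the first three coordinates, $\mathbb{H}^2\times\mathbb{R}\subset\mathbb{L}^4$; linear operations are in $\mathbb{L}^4$. For $\psi=(N,h)$: $\eta=(\hat N,u)$ is the unit normal tangent to $\mathbb{H}^2\times\mathbb{R}$, $u$ the angle function; regular vertical projection means $u\ne0$, canonical orientation $u>0$; hyperbolic Gauss map $G$ by $(G,1)=(\eta+N)/u$; $p=-\langle\psi_z,\eta_z\rangle$, $H$ mean curvature, Abresch–Rosenberg differential $Q=2Hp+h_z^2$. *)

theory Defs
  imports "HOL-Analysis.Analysis"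
begin

type_synonym L4 = "real ^ 4"

definition lor :: "L4 \<Rightarrow> L4 \<Rightarrow> real" where
  "lor x y = - (x$0 * y$0) + x$1 * y$1 + x$2 * y$2 + x$3 * y$3"

definition H2R :: "L4 set" where
  "H2R = {x. - (x$0 * x$0) + x$1 * x$1 + x$2 * x$2 = -1 \<and> x$0 > 0}"

text \<open>For x = (N,h) in H^2 x R, the vertical projection (N,0), seen in L^4.\<close>
definition vproj :: "L4 \<Rightarrow> L4" where
  "vproj x = (\<chi> i. if i = 3 then 0 else x $ i)"

definition height :: "L4 \<Rightarrow> real" where
  "height x = x $ 3"

definition px :: "(complex \<Rightarrow> 'a::real_normed_vector) \<Rightarrow> complex \<Rightarrow> 'a" where
  "px f z = vector_derivative (\<lambda>t::real. f (z + of_real t)) (at 0)"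

definition py :: "(complex \<Rightarrow> 'a::real_normed_vector) \<Rightarrow> complex \<Rightarrow> 'a" where
  "py f z = vector_derivative (\<lambda>t::real. f (z + of_real t * \<i>)) (at 0)"

text \<open>Iterated partial derivatives; True = d/dx, False = d/dy.\<close>
fun pd :: "bool list \<Rightarrow> (complex \<Rightarrow> 'a::real_normed_vector) \<Rightarrow> complex \<Rightarrow> 'a" where
  "pd [] f = f"
| "pd (d # ds) f = (if d then px (pd ds f) else py (pd ds f))"

definition smooth_on :: "complex set \<Rightarrow> (complex \<Rightarrow> 'a::real_normed_vector) \<Rightarrow> bool" where
  "smooth_on S f \<longleftrightarrow> (\<forall>ds. \<forall>z\<in>S. pd ds f differentiable (at z))"

definition lam :: "(complex \<Rightarrow> L4) \<Rightarrow> complex \<Rightarrow> real" where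
  "lam \<psi> z = lor (px \<psi> z) (px \<psi> z)"

definition conformal_immersion :: "complex set \<Rightarrow> (complex \<Rightarrow> L4) \<Rightarrow> bool" where
  "conformal_immersion S \<psi> \<longleftrightarrow> smooth_on S \<psi> \<and>
     (\<forall>z\<in>S. \<psi> z \<in> H2R \<and> lam \<psi> z > 0 \<and>
        lor (py \<psi> z) (py \<psi> z) = lam \<psi> z \<and> lor (px \<psi> z) (py \<psi> z) = 0)"

definition unit_normal :: "complex set \<Rightarrow> (complex \<Rightarrow> L4) \<Rightarrow> (complex \<Rightarrow> L4) \<Rightarrow> bool" where
  "unit_normal S \<psi> \<eta> \<longleftrightarrow> (\<forall>z\<in>S. lor (\<eta> z) (\<eta> z) = 1 \<and>
      lor (\<eta> z) (px \<psi> z) = 0 \<and> lor (\<eta> z) (py \<psi> z) = 0 \<and>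
      lor (\<eta> z) (vproj (\<psi> z)) = 0)"

definition angle :: "(complex \<Rightarrow> L4) \<Rightarrow> complex \<Rightarrow> real" where
  "angle \<eta> z = \<eta> z $ 3"

definition meancurv :: "(complex \<Rightarrow> L4) \<Rightarrow> (complex \<Rightarrow> L4) \<Rightarrow> complex \<Rightarrow> real" where
  "meancurv \<psi> \<eta> z =
     (lor (px (px \<psi>) z) (\<eta> z) + lor (py (py \<psi>) z) (\<eta> z)) / (2 * lam \<psi> z)"

text \<open>Complexified vectors as pairs (real part, imaginary part); complex-bilinear
  extension of the Lorentzian product; f_z = (f_x - i f_y)/2.\<close>
definition lorC :: "L4 \<times> L4 \<Rightarrow> L4 \<times> L4 \<Rightarrow> complex" where
  "lorC v w = Complex (lor (fst v) (fst w) - lor (snd v) (snd w))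
                      (lor (fst v) (snd w) + lor (snd v) (fst w))"

definition dz :: "(complex \<Rightarrow> L4) \<Rightarrow> complex \<Rightarrow> L4 \<times> L4" where
  "dz f z = ((1/2) *\<^sub>R px f z, - (1/2) *\<^sub>R py f z)"

definition dzr :: "(complex \<Rightarrow> real) \<Rightarrow> complex \<Rightarrow> complex" where
  "dzr f z = Complex (px f z / 2) (- py f z / 2)"

definition pfun :: "(complex \<Rightarrow> L4) \<Rightarrow> (complex \<Rightarrow> L4) \<Rightarrow> complex \<Rightarrow> complex" where
  "pfun \<psi> \<eta> z = - lorC (dz \<psi> z) (dz \<eta> z)"

definition ARQ :: "(complex \<Rightarrow> L4) \<Rightarrow> (complex \<Rightarrow> L4) \<Rightarrow> complex \<Rightarrow> complex" where
  "ARQ \<psi> \<eta> z = 2 * of_real (meancurv \<psi> \<eta> z) * pfun \<psi> \<eta> z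
                 + (dzr (\<lambda>w. height (\<psi> w)) z)^2"

text \<open>(G,1) = (\<eta> + N)/u, with G the hyperbolic Gauss map.\<close>
definition hgauss1 :: "(complex \<Rightarrow> L4) \<Rightarrow> (complex \<Rightarrow> L4) \<Rightarrow> complex \<Rightarrow> L4" where
  "hgauss1 \<psi> \<eta> z = (1 / angle \<eta> z) *\<^sub>R (\<eta> z + vproj (\<psi> z))"

definition psharp :: "(complex \<Rightarrow> L4) \<Rightarrow> (complex \<Rightarrow> L4) \<Rightarrow> complex \<Rightarrow> L4" where
  "psharp \<psi> \<eta> z = - \<psi> z + (2 / angle \<eta> z) *\<^sub>R hgauss1 \<psi> \<eta> z"

end

(* Everything reduces to linear algebra at a single point. In the Lorentz-orthogonal frame
   \<psi>_x, \<psi>_y, \<eta>, N of L^4, differentiating the constraints of the immersion expresses \<eta>_x, \<eta>_y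
   through the symmetric matrix a_ij = <\<eta>_i, \<psi>_j>, whose trace is -\<lambda> because H = 1/2, and
   through the heights h_x, h_y of \<psi>_x, \<psi>_y, which satisfy h_x^2 + h_y^2 = \<lambda> (1 - u^2) because
   the vertical unit vector e_3 has length 1. In this frame the partial derivatives of
   \<psi># = - \<psi> + (2/u^2) (\<eta> + N) have coordinates linear in Re Q and Im Q, where
   4 Q = a_22 - a_11 + h_x^2 - h_y^2 + 2 i (a_12 - h_x h_y). So \<psi># is conformal with factor
   16 |Q|^2 / (\<lambda> u^4), and \<eta># = \<eta> + N - N#, the only normal compatible with angle u and
   Gauss map G, is a unit normal with respect to which \<psi># has mean curvature 1/2: all of these
   are polynomial identities in the frame coordinates. *)

theory Submission
  imports Defs
begin

lemma has_vector_derivative_horizontal: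
  assumes "(f has_derivative f') (at (c + of_real a))"
  shows "((\<lambda>t. f (c + of_real t)) has_vector_derivative f' 1) (at a)"
proof -
  have "((\<lambda>t::real. c + of_real t) has_derivative of_real) (at a)"
    by (auto intro!: derivative_eq_intros)
  from has_derivative_compose[OF this assms]
  have "((\<lambda>t. f (c + of_real t)) has_derivative (\<lambda>t. f' (of_real t))) (at a)" .
  moreover have "f' (of_real t) = t *\<^sub>R f' 1" for t
    by (metis assms has_derivative_linear linear_scale mult.right_neutral scaleR_conv_of_real)
  ultimately show ?thesis
    unfolding has_vector_derivative_def by simp
qed

lemma has_vector_derivative_vertical:
  assumes "(f has_derivative f') (at (c + of_real b * \<i>))"
  shows "((\<lambda>t. f (c + of_real t * \<i>)) has_vector_derivative f' \<i>) (at b)"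
proof -
  have "((\<lambda>t::real. c + of_real t * \<i>) has_derivative (\<lambda>t. of_real t * \<i>)) (at b)"
    by (auto intro!: derivative_eq_intros)
  from has_derivative_compose[OF this assms]
  have "((\<lambda>t. f (c + of_real t * \<i>)) has_derivative (\<lambda>t. f' (of_real t * \<i>))) (at b)" .
  moreover have "f' (of_real t * \<i>) = t *\<^sub>R f' \<i>" for t
    by (metis assms has_derivative_linear linear_scale scaleR_conv_of_real)
  ultimately show ?thesis
    unfolding has_vector_derivative_def by simp
qed

lemma partials_eq_derivative:
  assumes "(f has_derivative f') (at z)"
  shows "px f z = f' 1" "py f z = f' \<i>"
  using has_vector_derivative_horizontal[of f f' z 0] has_vector_derivative_vertical[of f f' z 0]
    assms vector_derivative_at unfolding px_def py_def by auto

lemma partials_eq_frechet_derivative: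
  assumes "f differentiable (at z)"
  shows "px f z = frechet_derivative f (at z) 1" "py f z = frechet_derivative f (at z) \<i>"
  using partials_eq_derivative assms frechet_derivative_works by blast+

lemma has_vector_derivative_px:
  assumes "f differentiable (at (c + of_real a))"
  shows "((\<lambda>t. f (c + of_real t)) has_vector_derivative px f (c + of_real a)) (at a)"
  using has_vector_derivative_horizontal assms frechet_derivative_works
  unfolding partials_eq_frechet_derivative(1)[OF assms] by blast

lemma has_vector_derivative_py:
  assumes "f differentiable (at (c + of_real b * \<i>))"
  shows "((\<lambda>t. f (c + of_real t * \<i>)) has_vector_derivative py f (c + of_real b * \<i>)) (at b)"
  using has_vector_derivative_vertical assms frechet_derivative_works
  unfolding partials_eq_frechet_derivative(2)[OF assms] by blast

lemma partials_cong_open: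
  assumes "open S" "z \<in> S" "\<forall>w\<in>S. f w = g w" "g differentiable (at z)"
  shows "f differentiable (at z)" "px f z = px g z" "py f z = py g z"
proof -
  have g: "(g has_derivative frechet_derivative g (at z)) (at z)"
    using assms(4) frechet_derivative_works by blast
  have f: "(f has_derivative frechet_derivative g (at z)) (at z)"
    by (rule has_derivative_transform_within_open[OF g assms(1,2)]) (use assms(3) in auto)
  show "f differentiable (at z)"
    using f differentiable_def by blast
  show "px f z = px g z" "py f z = py g z"
    using partials_eq_derivative[OF f] partials_eq_derivative[OF g] by simp_all
qed

lemma partials_const: "px (\<lambda>w. c) z = 0" "py (\<lambda>w. c) z = 0"
  using partials_eq_derivative[OF has_derivative_const] by auto

lemma partials_add:
  assumes "f differentiable (at z)" "g differentiable (at z)"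
  shows "(\<lambda>w. f w + g w) differentiable (at z)"
    "px (\<lambda>w. f w + g w) z = px f z + px g z"
    "py (\<lambda>w. f w + g w) z = py f z + py g z"
proof -
  note h = has_derivative_add[OF assms[unfolded frechet_derivative_works]]
  show "(\<lambda>w. f w + g w) differentiable (at z)"
    using h differentiable_def by blast
  show "px (\<lambda>w. f w + g w) z = px f z + px g z" "py (\<lambda>w. f w + g w) z = py f z + py g z"
    using partials_eq_derivative[OF h] by (simp_all add: partials_eq_frechet_derivative assms)
qed

lemma partials_linear:
  assumes "bounded_linear L" "f differentiable (at z)"
  shows "(\<lambda>w. L (f w)) differentiable (at z)"
    "px (\<lambda>w. L (f w)) z = L (px f z)"
    "py (\<lambda>w. L (f w)) z = L (py f z)"
proof -
  note h = bounded_linear.has_derivative[OF assms(1) assms(2)[unfolded frechet_derivative_works]]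
  show "(\<lambda>w. L (f w)) differentiable (at z)"
    using h differentiable_def by blast
  show "px (\<lambda>w. L (f w)) z = L (px f z)" "py (\<lambda>w. L (f w)) z = L (py f z)"
    using partials_eq_derivative[OF h] by (simp_all add: partials_eq_frechet_derivative assms)
qed

lemma partials_bilinear:
  assumes "bounded_bilinear bp" "f differentiable (at z)" "g differentiable (at z)"
  shows "(\<lambda>w. bp (f w) (g w)) differentiable (at z)"
    "px (\<lambda>w. bp (f w) (g w)) z = bp (px f z) (g z) + bp (f z) (px g z)"
    "py (\<lambda>w. bp (f w) (g w)) z = bp (py f z) (g z) + bp (f z) (py g z)"
proof -
  note h = bounded_bilinear.FDERIV[OF assms(1) assms(2,3)[unfolded frechet_derivative_works]]
  show "(\<lambda>w. bp (f w) (g w)) differentiable (at z)"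
    using h differentiable_def by blast
  show "px (\<lambda>w. bp (f w) (g w)) z = bp (px f z) (g z) + bp (f z) (px g z)"
    "py (\<lambda>w. bp (f w) (g w)) z = bp (py f z) (g z) + bp (f z) (py g z)"
    using partials_eq_derivative[OF h]
    by (simp_all add: partials_eq_frechet_derivative assms add.commute)
qed

lemma partials_inverse:
  fixes u :: "complex \<Rightarrow> real"
  assumes "u differentiable (at z)" "u z \<noteq> 0"
  shows "(\<lambda>w. inverse (u w)) differentiable (at z)"
    "px (\<lambda>w. inverse (u w)) z = - px u z * (inverse (u z) * inverse (u z))"
    "py (\<lambda>w. inverse (u w)) z = - py u z * (inverse (u z) * inverse (u z))"
proof -
  note h = Deriv.has_derivative_inverse[OF assms(2) assms(1)[unfolded frechet_derivative_works]]
  show "(\<lambda>w. inverse (u w)) differentiable (at z)"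
    using h differentiable_def by blast
  show "px (\<lambda>w. inverse (u w)) z = - px u z * (inverse (u z) * inverse (u z))"
    "py (\<lambda>w. inverse (u w)) z = - py u z * (inverse (u z) * inverse (u z))"
    using partials_eq_derivative[OF h]
    by (simp_all add: partials_eq_frechet_derivative assms algebra_simps)
qed

definition smooth_upto :: "complex set \<Rightarrow> nat \<Rightarrow> (complex \<Rightarrow> 'a::real_normed_vector) \<Rightarrow> bool" where
  "smooth_upto S n f \<longleftrightarrow> (\<forall>ds. length ds \<le> n \<longrightarrow> (\<forall>z\<in>S. pd ds f differentiable (at z)))"

lemma smooth_on_iff_smooth_upto: "smooth_on S f \<longleftrightarrow> (\<forall>n. smooth_upto S n f)"
  unfolding smooth_on_def smooth_upto_def by auto

lemma smooth_upto_differentiable: "smooth_upto S n f \<Longrightarrow> z \<in> S \<Longrightarrow> f differentiable (at z)"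
  unfolding smooth_upto_def by (metis le0 list.size(3) pd.simps(1))

lemma smooth_upto_Suc_mono: "smooth_upto S (Suc n) f \<Longrightarrow> smooth_upto S n f"
  unfolding smooth_upto_def by auto

lemma pd_px: "pd ds (px f) = pd (ds @ [True]) f"
  and pd_py: "pd ds (py f) = pd (ds @ [False]) f"
  by (induction ds) auto

lemma smooth_upto_Suc:
  "smooth_upto S (Suc n) f \<longleftrightarrow>
     (\<forall>z\<in>S. f differentiable (at z)) \<and> smooth_upto S n (px f) \<and> smooth_upto S n (py f)"
proof
  assume *: "smooth_upto S (Suc n) f"
  show "(\<forall>z\<in>S. f differentiable (at z)) \<and> smooth_upto S n (px f) \<and> smooth_upto S n (py f)"
    using smooth_upto_differentiable[OF *] * unfolding smooth_upto_def pd_px pd_py by auto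
next
  assume *: "(\<forall>z\<in>S. f differentiable (at z)) \<and> smooth_upto S n (px f) \<and> smooth_upto S n (py f)"
  show "smooth_upto S (Suc n) f"
    unfolding smooth_upto_def
  proof (intro allI impI)
    fix ds :: "bool list"
    assume "length ds \<le> Suc n"
    then show "\<forall>z\<in>S. pd ds f differentiable (at z)"
    proof (cases ds rule: rev_exhaust)
      case (snoc ys d)
      then show ?thesis
        using * \<open>length ds \<le> Suc n\<close> unfolding smooth_upto_def
        by (cases d) (auto simp flip: pd_px pd_py)
    qed (use * in simp)
  qed
qed

lemma smooth_upto_cong:
  assumes "open S" "\<forall>w\<in>S. f w = g w" "smooth_upto S n g"
  shows "smooth_upto S n f"
proof -
  have "length ds \<le> n \<longrightarrow> (\<forall>w\<in>S. pd ds f w = pd ds g w)" for ds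
  proof (induction ds)
    case (Cons d ds)
    show ?case
    proof
      assume "length (d # ds) \<le> n"
      then have "\<forall>w\<in>S. pd ds f w = pd ds g w" "\<forall>z\<in>S. pd ds g differentiable (at z)"
        using Cons assms(3) unfolding smooth_upto_def by auto
      then show "\<forall>w\<in>S. pd (d # ds) f w = pd (d # ds) g w"
        by (cases d) (auto intro: partials_cong_open(2,3)[OF assms(1)])
    qed
  qed (use assms(2) in simp)
  then show ?thesis
    using partials_cong_open(1)[OF assms(1)] assms(3) unfolding smooth_upto_def by blast
qed

lemma smooth_upto_SucI:
  assumes "open S" "\<forall>z\<in>S. f differentiable (at z)"
    and "\<forall>z\<in>S. px f z = fx z" "smooth_upto S n fx"
    and "\<forall>z\<in>S. py f z = fy z" "smooth_upto S n fy"
  shows "smooth_upto S (Suc n) f"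
  using assms smooth_upto_cong[OF assms(1), of "px f" fx] smooth_upto_cong[OF assms(1), of "py f" fy]
  by (simp add: smooth_upto_Suc)

lemma smooth_upto_add:
  assumes "open S"
  shows "smooth_upto S n f \<Longrightarrow> smooth_upto S n g \<Longrightarrow> smooth_upto S n (\<lambda>w. f w + g w)"
proof (induction n arbitrary: f g)
  case 0
  then show ?case
    using partials_add(1) by (auto simp: smooth_upto_def)
next
  case (Suc n)
  then show ?case
    using smooth_upto_differentiable[OF Suc.prems(1)] smooth_upto_differentiable[OF Suc.prems(2)]
    by (intro smooth_upto_SucI[OF assms, where fx = "\<lambda>w. px f w + px g w" and fy = "\<lambda>w. py f w + py g w"])
      (simp_all add: partials_add Suc.IH smooth_upto_Suc)
qed

lemma smooth_upto_linear:
  assumes "open S" "bounded_linear L"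
  shows "smooth_upto S n f \<Longrightarrow> smooth_upto S n (\<lambda>w. L (f w))"
proof (induction n arbitrary: f)
  case 0
  then show ?case
    using partials_linear(1)[OF assms(2)] by (auto simp: smooth_upto_def)
next
  case (Suc n)
  then show ?case
    using smooth_upto_differentiable[OF Suc.prems]
    by (intro smooth_upto_SucI[OF assms(1), where fx = "\<lambda>w. L (px f w)" and fy = "\<lambda>w. L (py f w)"])
      (simp_all add: partials_linear[OF assms(2)] Suc.IH smooth_upto_Suc)
qed

lemma smooth_upto_bilinear:
  assumes "open S" "bounded_bilinear bp"
  shows "smooth_upto S n f \<Longrightarrow> smooth_upto S n g \<Longrightarrow> smooth_upto S n (\<lambda>w. bp (f w) (g w))"
proof (induction n arbitrary: f g)
  case 0
  then show ?case
    using partials_bilinear(1)[OF assms(2)] by (auto simp: smooth_upto_def)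
next
  case (Suc n)
  then show ?case
    using smooth_upto_differentiable[OF Suc.prems(1)] smooth_upto_differentiable[OF Suc.prems(2)]
      smooth_upto_Suc_mono[OF Suc.prems(1)] smooth_upto_Suc_mono[OF Suc.prems(2)]
    by (intro smooth_upto_SucI[OF assms(1),
          where fx = "\<lambda>w. bp (px f w) (g w) + bp (f w) (px g w)"
            and fy = "\<lambda>w. bp (py f w) (g w) + bp (f w) (py g w)"])
      (simp_all add: partials_bilinear[OF assms(2)] Suc.IH smooth_upto_add[OF assms(1)]
        smooth_upto_Suc)
qed

lemma smooth_upto_inverse:
  fixes u :: "complex \<Rightarrow> real"
  assumes "open S" "\<forall>w\<in>S. u w \<noteq> 0"
  shows "smooth_upto S n u \<Longrightarrow> smooth_upto S n (\<lambda>w. inverse (u w))"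
proof (induction n)
  case 0
  then show ?case
    using partials_inverse(1) assms(2) by (auto simp: smooth_upto_def)
next
  case (Suc n)
  have inv: "smooth_upto S n (\<lambda>w. inverse (u w))"
    using Suc smooth_upto_Suc_mono by blast
  have "smooth_upto S n (\<lambda>w. - (D w * (inverse (u w) * inverse (u w))))"
    if "smooth_upto S n D" for D
    using smooth_upto_linear[OF assms(1) bounded_linear_minus[OF bounded_linear_ident]
        smooth_upto_bilinear[OF assms(1) bounded_bilinear_mult that
          smooth_upto_bilinear[OF assms(1) bounded_bilinear_mult inv inv]]] .
  then show ?case
    using smooth_upto_differentiable[OF Suc.prems] assms(2) Suc.prems
    by (intro smooth_upto_SucI[OF assms(1),
          where fx = "\<lambda>w. - (px u w * (inverse (u w) * inverse (u w)))"
            and fy = "\<lambda>w. - (py u w * (inverse (u w) * inverse (u w)))"])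
      (simp_all add: partials_inverse smooth_upto_Suc)
qed

section \<open>Symmetry of mixed partial derivatives\<close>

lemma mixed_difference_mvt:
  fixes G Gx Gxy :: "real \<Rightarrow> real \<Rightarrow> real"
  assumes s: "s > 0"
    and Gx: "\<And>x y. 0 \<le> x \<Longrightarrow> x \<le> s \<Longrightarrow> 0 \<le> y \<Longrightarrow> y \<le> s \<Longrightarrow>
               ((\<lambda>x. G x y) has_real_derivative Gx x y) (at x)"
    and Gxy: "\<And>x y. 0 \<le> x \<Longrightarrow> x \<le> s \<Longrightarrow> 0 \<le> y \<Longrightarrow> y \<le> s \<Longrightarrow>
               ((\<lambda>y. Gx x y) has_real_derivative Gxy x y) (at y)"
  shows "\<exists>a b. 0 < a \<and> a < s \<and> 0 < b \<and> b < s \<and> G s s - G s 0 - G 0 s + G 0 0 = s\<^sup>2 * Gxy a b"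
proof -
  have "\<exists>a. 0 < a \<and> a < s \<and> (G s s - G s 0) - (G 0 s - G 0 0) = (s - 0) * (Gx a s - Gx a 0)"
    by (rule MVT2[OF s]) (intro DERIV_diff Gx; use s in simp)
  then obtain a where a: "0 < a" "a < s"
    and "(G s s - G s 0) - (G 0 s - G 0 0) = s * (Gx a s - Gx a 0)"
    by auto
  moreover have "\<exists>b. 0 < b \<and> b < s \<and> Gx a s - Gx a 0 = (s - 0) * Gxy a b"
    by (rule MVT2[OF s]) (intro Gxy; use a in simp)
  then obtain b where "0 < b" "b < s" and "Gx a s - Gx a 0 = s * Gxy a b"
    by auto
  ultimately show ?thesis
    by (auto simp: power2_eq_square algebra_simps)
qed

lemma continuous_eq_if_values_agree_nearby:
  fixes A B :: "'a::metric_space \<Rightarrow> 'b::metric_space"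
  assumes "continuous (at z) A" "continuous (at z) B"
    and near: "\<And>e. e > 0 \<Longrightarrow> \<exists>p q. dist p z < e \<and> dist q z < e \<and> A p = B q"
  shows "A z = B z"
proof (rule ccontr)
  assume "A z \<noteq> B z"
  define e where "e = dist (A z) (B z) / 2"
  have "e > 0"
    using \<open>A z \<noteq> B z\<close> by (simp add: e_def)
  then obtain dA where "dA > 0" "\<forall>p. dist p z < dA \<longrightarrow> dist (A p) (A z) < e"
    using assms(1) unfolding continuous_at_eps_delta by blast
  moreover obtain dB where "dB > 0" "\<forall>q. dist q z < dB \<longrightarrow> dist (B q) (B z) < e"
    using assms(2) \<open>e > 0\<close> unfolding continuous_at_eps_delta by blast
  moreover obtain p q where "dist p z < min dA dB" "dist q z < min dA dB" and pq: "A p = B q"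
    using near[of "min dA dB"] calculation by auto
  ultimately have "dist (A p) (A z) < e" "dist (B q) (B z) < e"
    by auto
  then have "dist (A z) (B z) < 2 * e"
    using dist_triangle3[of "A z" "B z" "A p"] pq by simp
  then show False
    by (simp add: e_def)
qed

lemma has_real_derivative_partials:
  fixes h :: "complex \<Rightarrow> real"
  assumes "h differentiable (at (z + of_real x + of_real y * \<i>))"
  shows "((\<lambda>t. h (z + of_real t + of_real y * \<i>)) has_real_derivative
      px h (z + of_real x + of_real y * \<i>)) (at x)"
    "((\<lambda>t. h (z + of_real x + of_real t * \<i>)) has_real_derivative
      py h (z + of_real x + of_real y * \<i>)) (at y)"
proof -
  show "((\<lambda>t. h (z + of_real t + of_real y * \<i>)) has_real_derivative
      px h (z + of_real x + of_real y * \<i>)) (at x)"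
    using has_vector_derivative_px[of h "z + of_real y * \<i>" x] assms
    by (simp add: has_real_derivative_iff_has_vector_derivative add_ac)
  show "((\<lambda>t. h (z + of_real x + of_real t * \<i>)) has_real_derivative
      py h (z + of_real x + of_real y * \<i>)) (at y)"
    using has_vector_derivative_py[of h "z + of_real x" y] assms
    by (simp add: has_real_derivative_iff_has_vector_derivative)
qed

lemma mixed_partials_mean_value:
  fixes g :: "complex \<Rightarrow> real" and z :: complex and s :: real
  defines "P x y \<equiv> z + of_real x + of_real y * \<i>"
  assumes g: "smooth_upto S 2 g" and "s > 0"
    and square: "\<And>x y. 0 \<le> x \<Longrightarrow> x \<le> s \<Longrightarrow> 0 \<le> y \<Longrightarrow> y \<le> s \<Longrightarrow> P x y \<in> S"
  shows "\<exists>a b a' b'. 0 < a \<and> a < s \<and> 0 < b \<and> b < s \<and> 0 < a' \<and> a' < s \<and> 0 < b' \<and> b' < s \<and>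
    py (px g) (P a b) = px (py g) (P a' b')"
proof -
  have "smooth_upto S 1 (px g)" "smooth_upto S 1 (py g)"
    using g by (simp_all add: smooth_upto_Suc numeral_2_eq_2)
  then have diff: "g differentiable (at (P x y))" "px g differentiable (at (P x y))"
      "py g differentiable (at (P x y))"
    if "0 \<le> x" "x \<le> s" "0 \<le> y" "y \<le> s" for x y
    using smooth_upto_differentiable g square[OF that] by blast+
  note horizontal = has_real_derivative_partials(1)[where z = z, folded P_def]
    and vertical = has_real_derivative_partials(2)[where z = z, folded P_def]
  text \<open>Both orders of differentiation compute the same mixed difference over the square.\<close>
  have "\<exists>a b. 0 < a \<and> a < s \<and> 0 < b \<and> b < s \<and>
      g (P s s) - g (P s 0) - g (P 0 s) + g (P 0 0) = s\<^sup>2 * py (px g) (P a b)"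
    by (rule mixed_difference_mvt[OF \<open>s > 0\<close>, of _ "\<lambda>x y. px g (P x y)"])
      (simp_all add: horizontal[OF diff(1)] vertical[OF diff(2)])
  then obtain a b where "0 < a" "a < s" "0 < b" "b < s"
    and xy: "g (P s s) - g (P s 0) - g (P 0 s) + g (P 0 0) = s\<^sup>2 * py (px g) (P a b)"
    by blast
  have "\<exists>b' a'. 0 < b' \<and> b' < s \<and> 0 < a' \<and> a' < s \<and>
      g (P s s) - g (P 0 s) - g (P s 0) + g (P 0 0) = s\<^sup>2 * px (py g) (P a' b')"
    by (rule mixed_difference_mvt[OF \<open>s > 0\<close>, of _ "\<lambda>y x. py g (P x y)"])
      (simp_all add: vertical[OF diff(1)] horizontal[OF diff(3)])
  then obtain a' b' where "0 < a'" "a' < s" "0 < b'" "b' < s"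
    and yx: "g (P s s) - g (P 0 s) - g (P s 0) + g (P 0 0) = s\<^sup>2 * px (py g) (P a' b')"
    by blast
  have "s\<^sup>2 * py (px g) (P a b) = s\<^sup>2 * px (py g) (P a' b')"
    using xy yx by linarith
  then have "py (px g) (P a b) = px (py g) (P a' b')"
    using \<open>s > 0\<close> by simp
  with \<open>0 < a\<close> \<open>a < s\<close> \<open>0 < b\<close> \<open>b < s\<close> \<open>0 < a'\<close> \<open>a' < s\<close> \<open>0 < b'\<close> \<open>b' < s\<close>
  show ?thesis
    by blast
qed

lemma py_px_eq_px_py_real:
  fixes g :: "complex \<Rightarrow> real"
  assumes S: "open S" "z \<in> S" and g: "smooth_upto S 2 g"
  shows "py (px g) z = px (py g) z"
proof (rule continuous_eq_if_values_agree_nearby[where A = "py (px g)" and B = "px (py g)"])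
  show "continuous (at z) (py (px g))" "continuous (at z) (px (py g))"
    using g S(2) by (auto intro!: differentiable_imp_continuous_within smooth_upto_differentiable
        simp: smooth_upto_Suc numeral_2_eq_2)
  fix e :: real
  assume "e > 0"
  obtain r where "r > 0" "ball z r \<subseteq> S"
    using S open_contains_ball by blast
  define s where "s = min r e / 3"
  have "s > 0"
    using \<open>r > 0\<close> \<open>e > 0\<close> by (simp add: s_def)
  define P where "P x y = z + of_real x + of_real y * \<i>" for x y
  have dist_P: "dist (P x y) z < min r e" if "0 \<le> x" "x \<le> s" "0 \<le> y" "y \<le> s" for x y
  proof -
    have "dist (P x y) z = cmod (of_real x + of_real y * \<i>)"
      by (simp add: P_def dist_norm)
    also have "\<dots> \<le> cmod (of_real x) + cmod (of_real y * \<i>)"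
      by (rule norm_triangle_ineq)
    also have "\<dots> \<le> 2 * s"
      using that by (simp add: norm_mult)
    finally show ?thesis
      using \<open>s > 0\<close> unfolding s_def by linarith
  qed
  then have "P x y \<in> S" if "0 \<le> x" "x \<le> s" "0 \<le> y" "y \<le> s" for x y
    using that \<open>ball z r \<subseteq> S\<close> by (force simp: dist_commute)
  then obtain a b a' b' where "0 < a" "a < s" "0 < b" "b < s" "0 < a'" "a' < s" "0 < b'" "b' < s"
    and "py (px g) (P a b) = px (py g) (P a' b')"
    using mixed_partials_mean_value[OF g \<open>s > 0\<close>] unfolding P_def by blast
  moreover have "dist (P a b) z < e" "dist (P a' b') z < e"
    using dist_P[of a b] dist_P[of a' b'] calculation by simp_all
  ultimately show "\<exists>p q. dist p z < e \<and> dist q z < e \<and> py (px g) p = px (py g) q"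
    by blast
qed

lemma py_px_eq_px_py:
  fixes f :: "complex \<Rightarrow> real ^ 'n"
  assumes S: "open S" "z \<in> S" and f: "smooth_upto S 2 f"
  shows "py (px f) z = px (py f) z"
proof -
  have f1: "smooth_upto S 1 (px f)" "smooth_upto S 1 (py f)"
    using f by (simp_all add: smooth_upto_Suc numeral_2_eq_2)
  have "py (px f) z $ i = px (py f) z $ i" for i
  proof -
    let ?g = "\<lambda>w. f w $ i"
    note nth = partials_linear[OF bounded_linear_vec_nth]
    have eq: "\<forall>w\<in>S. px ?g w = px f w $ i" "\<forall>w\<in>S. py ?g w = py f w $ i"
      using nth(2,3) smooth_upto_differentiable[OF f] by blast+
    have dfx: "px f differentiable (at z)" and dfy: "py f differentiable (at z)"
      using smooth_upto_differentiable f1 S(2) by blast+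
    have "py (px ?g) z = py (px f) z $ i"
      using partials_cong_open(3)[OF S eq(1) nth(1)[OF dfx]] nth(3)[OF dfx] by simp
    moreover have "px (py ?g) z = px (py f) z $ i"
      using partials_cong_open(2)[OF S eq(2) nth(1)[OF dfy]] nth(2)[OF dfy] by simp
    moreover have "smooth_upto S 2 ?g"
      using smooth_upto_linear[OF S(1) bounded_linear_vec_nth f] .
    then have "py (px ?g) z = px (py ?g) z"
      by (rule py_px_eq_px_py_real[OF S])
    ultimately show ?thesis
      by simp
  qed
  then show ?thesis
    by (simp add: vec_eq_iff)
qed

lemma lor_add_left [simp]: "lor (x + y) z = lor x z + lor y z"
  and lor_add_right [simp]: "lor x (y + z) = lor x y + lor x z"
  and lor_diff_left [simp]: "lor (x - y) z = lor x z - lor y z"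
  and lor_diff_right [simp]: "lor x (y - z) = lor x y - lor x z"
  and lor_scaleR_left [simp]: "lor (r *\<^sub>R x) y = r * lor x y"
  and lor_scaleR_right [simp]: "lor x (r *\<^sub>R y) = r * lor x y"
  and lor_minus_left [simp]: "lor (- x) y = - lor x y"
  and lor_minus_right [simp]: "lor x (- y) = - lor x y"
  and lor_zero_left [simp]: "lor 0 x = 0"
  and lor_zero_right [simp]: "lor x 0 = 0"
  by (simp_all add: lor_def algebra_simps)

lemma lor_commute: "lor x y = lor y x"
  by (simp add: lor_def algebra_simps)

lemma lor_sum_left: "lor (\<Sum>x\<in>A. f x) y = (\<Sum>x\<in>A. lor (f x) y)"
  by (induction A rule: infinite_finite_induct) auto

lemma bounded_bilinear_lor: "bounded_bilinear lor"
proof (unfold_locales, simp_all, intro exI allI)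
  fix a b :: L4
  have "\<bar>a $ i * b $ i\<bar> \<le> norm a * norm b" for i
    unfolding abs_mult by (intro mult_mono) (auto simp: component_le_norm_cart)
  then show "\<bar>lor a b\<bar> \<le> norm a * norm b * 4"
    unfolding lor_def by (smt (verit) mult.commute)
qed

lemma lor_time_flip: "lor v (\<chi> i. if i = 0 then - v $ i else v $ i) = v \<bullet> v"
proof -
  have four: "(4::4) = 0"
    by simp
  show ?thesis
    by (simp add: lor_def inner_vec_def sum_4 four)
qed

definition e3 :: L4 where
  "e3 = (\<chi> i. if i = 3 then 1 else 0)"

lemma lor_e3 [simp]: "lor v e3 = v $ 3" "lor e3 v = v $ 3"
  by (simp_all add: lor_def e3_def)

lemma vproj_eq: "vproj x = x - (x $ 3) *\<^sub>R e3"
  by (auto simp: vproj_def e3_def vec_eq_iff)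

lemma vproj_nth_3 [simp]: "vproj x $ 3 = 0"
  by (simp add: vproj_def)

lemma vproj_idem [simp]: "vproj (vproj x) = vproj x"
  by (simp add: vproj_def vec_eq_iff)

lemma bounded_linear_vproj: "bounded_linear vproj"
  unfolding vproj_eq[abs_def]
  by (intro bounded_linear_sub bounded_linear_ident
      bounded_linear_compose[OF bounded_linear_scaleR_left bounded_linear_vec_nth])

lemma vproj_add [simp]: "vproj (x + y) = vproj x + vproj y"
  and vproj_diff [simp]: "vproj (x - y) = vproj x - vproj y"
  and vproj_scaleR [simp]: "vproj (r *\<^sub>R x) = r *\<^sub>R vproj x"
  and vproj_minus [simp]: "vproj (- x) = - vproj x"
  by (simp_all add: vproj_eq algebra_simps)

lemma lor_vproj_left: "lor (vproj x) y = lor x y - x $ 3 * y $ 3"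
  and lor_vproj_right: "lor x (vproj y) = lor x y - x $ 3 * y $ 3"
  by (simp_all add: vproj_eq)

lemma H2R_iff: "x \<in> H2R \<longleftrightarrow> lor (vproj x) (vproj x) = -1 \<and> vproj x $ 0 > 0"
  by (simp add: H2R_def lor_def vproj_def)

lemma lor_orthogonal_frame_eq_0:
  fixes X Y E N W :: L4
  assumes nz: "lor X X \<noteq> 0" "lor Y Y \<noteq> 0" "lor E E \<noteq> 0" "lor N N \<noteq> 0"
    and orth: "lor X Y = 0" "lor X E = 0" "lor X N = 0" "lor Y E = 0" "lor Y N = 0" "lor E N = 0"
    and W: "lor W X = 0" "lor W Y = 0" "lor W E = 0" "lor W N = 0"
  shows "W = 0"
proof -
  let ?B = "{X, Y, E, N}"
  have orth': "lor Y X = 0" "lor E X = 0" "lor N X = 0" "lor E Y = 0" "lor N Y = 0" "lor N E = 0"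
    using orth by (simp_all add: lor_commute)
  have distinct: "X \<noteq> Y" "X \<noteq> E" "X \<noteq> N" "Y \<noteq> E" "Y \<noteq> N" "E \<noteq> N"
    using nz orth by auto
  have "independent ?B"
  proof (rule independent_if_scalars_zero)
    fix c and x :: L4
    assume "(\<Sum>y\<in>?B. c y *\<^sub>R y) = 0" "x \<in> ?B"
    then have "(\<Sum>y\<in>?B. c y * lor y x) = 0"
      using lor_sum_left[of "\<lambda>y. c y *\<^sub>R y" ?B x] by simp
    moreover have "(\<Sum>y\<in>?B. c y * lor y x) = c x * lor x x"
      using \<open>x \<in> ?B\<close> distinct orth orth' by (auto simp: sum.insert_remove)
    ultimately show "c x = 0"
      using \<open>x \<in> ?B\<close> nz by auto
  qed simp
  moreover have "card ?B = 4"
    using distinct by auto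
  ultimately have "UNIV \<subseteq> span ?B"
    by (intro eucl.card_ge_dim_independent) simp_all
  moreover have "span ?B \<subseteq> {v. lor W v = 0}"
    using W by (intro span_minimal) (auto simp: subspace_def)
  ultimately have "lor W (\<chi> i. if i = 0 then - W $ i else W $ i) = 0"
    by blast
  then show "W = 0"
    by (simp add: lor_time_flip)
qed

lemma lor_orthogonal_expansion:
  fixes X Y E N V :: L4
  assumes nz: "lor X X \<noteq> 0" "lor Y Y \<noteq> 0" "lor E E \<noteq> 0" "lor N N \<noteq> 0"
    and orth: "lor X Y = 0" "lor X E = 0" "lor X N = 0" "lor Y E = 0" "lor Y N = 0" "lor E N = 0"
  shows "V = (lor V X / lor X X) *\<^sub>R X + (lor V Y / lor Y Y) *\<^sub>R Y
           + (lor V E / lor E E) *\<^sub>R E + (lor V N / lor N N) *\<^sub>R N"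
proof -
  have "V - ((lor V X / lor X X) *\<^sub>R X + (lor V Y / lor Y Y) *\<^sub>R Y
           + (lor V E / lor E E) *\<^sub>R E + (lor V N / lor N N) *\<^sub>R N) = 0"
    by (rule lor_orthogonal_frame_eq_0[OF nz orth]) (use nz orth in \<open>simp_all add: lor_commute\<close>)
  then show ?thesis
    by simp
qed

lemma lor_timelike_same_cone:
  assumes a: "lor a a < 0" and b: "lor b b < 0" and ab: "lor a b < 0" and a0: "a $ 0 > 0"
  shows "b $ 0 > 0"
proof (rule ccontr)
  assume "\<not> b $ 0 > 0"
  define sa where "sa = (a $ 1)\<^sup>2 + (a $ 2)\<^sup>2 + (a $ 3)\<^sup>2"
  define sb where "sb = (b $ 1)\<^sup>2 + (b $ 2)\<^sup>2 + (b $ 3)\<^sup>2"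
  define sab where "sab = a $ 1 * b $ 1 + a $ 2 * b $ 2 + a $ 3 * b $ 3"
  have "sa * sb - sab\<^sup>2 = (a $ 1 * b $ 2 - a $ 2 * b $ 1)\<^sup>2 + (a $ 1 * b $ 3 - a $ 3 * b $ 1)\<^sup>2
      + (a $ 2 * b $ 3 - a $ 3 * b $ 2)\<^sup>2"
    unfolding sa_def sb_def sab_def by (simp add: power2_eq_square algebra_simps)
  then have "sab\<^sup>2 \<le> sa * sb"
    by (metis add_nonneg_nonneg diff_ge_0_iff_ge zero_le_power2)
  also have "\<dots> < (a $ 0)\<^sup>2 * (b $ 0)\<^sup>2"
  proof (rule mult_strict_mono')
    show "sa < (a $ 0)\<^sup>2" "sb < (b $ 0)\<^sup>2"
      using a b unfolding sa_def sb_def lor_def by (simp_all add: power2_eq_square)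
  qed (simp_all add: sa_def sb_def)
  also have "\<dots> < sab\<^sup>2"
  proof -
    have "sab < a $ 0 * b $ 0" "a $ 0 * b $ 0 \<le> 0"
      using ab a0 \<open>\<not> b $ 0 > 0\<close> unfolding sab_def lor_def
      by (simp_all add: mult_nonneg_nonpos)
    then have "(- (a $ 0 * b $ 0))\<^sup>2 < (- sab)\<^sup>2"
      by (intro power_strict_mono) auto
    then show ?thesis
      by (simp add: power_mult_distrib)
  qed
  finally show False .
qed

lemma lor_const_partials:
  assumes S: "open S" "w \<in> S" and const: "\<forall>v\<in>S. lor (f v) (g v) = k"
    and f: "f differentiable (at w)" and g: "g differentiable (at w)"
  shows "lor (px f w) (g w) + lor (f w) (px g w) = 0"
    "lor (py f w) (g w) + lor (f w) (py g w) = 0"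
  using partials_bilinear[OF bounded_bilinear_lor f g] partials_const[of k w]
    partials_cong_open(2,3)[OF S const differentiable_const] by simp_all

section \<open>Pointwise algebra in an adapted frame\<close>

text \<open>For \<open>\<psi>\<^sup># = - \<psi> + (2 / u\<^sup>2) (\<eta> + N)\<close>, \<open>psharp_deriv \<eta> N u V W\<close> is the derivative
  of \<open>\<psi>\<^sup>#\<close> along a direction in which \<open>\<psi>\<close> and \<open>\<eta>\<close> have derivatives \<open>V\<close> and \<open>W\<close>
  (lemma \<open>partials_psharp\<close>); likewise \<open>normal_sharp_deriv\<close> for \<open>\<eta>\<^sup># = \<eta> + N - vproj \<psi>\<^sup>#\<close>.\<close>

definition psharp_deriv :: "L4 \<Rightarrow> L4 \<Rightarrow> real \<Rightarrow> L4 \<Rightarrow> L4 \<Rightarrow> L4" where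
  "psharp_deriv \<eta> N u V W =
     - V + (2 / u\<^sup>2) *\<^sub>R (W + vproj V) - (4 * W $ 3 / u ^ 3) *\<^sub>R (\<eta> + N)"

definition normal_sharp_deriv :: "L4 \<Rightarrow> L4 \<Rightarrow> real \<Rightarrow> L4 \<Rightarrow> L4 \<Rightarrow> L4" where
  "normal_sharp_deriv \<eta> N u V W = W + vproj V - vproj (psharp_deriv \<eta> N u V W)"

text \<open>First-order data of the immersion at one point: \<open>\<psi>\<^sub>x, \<psi>\<^sub>y, \<eta>, N = vproj \<psi>, \<eta>\<^sub>x,
  \<eta>\<^sub>y\<close>, the conformal factor \<open>l\<close>, the angle \<open>u\<close>, the heights \<open>hx, hy\<close> of \<open>\<psi>\<^sub>x, \<psi>\<^sub>y\<close> and the symmetric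
  matrix \<open>a\<^sub>i\<^sub>j = \<langle>\<eta>\<^sub>i, \<psi>\<^sub>j\<rangle>\<close>, whose trace is \<open>-l\<close> because \<open>H = 1/2\<close>.\<close>

locale half_cmc_frame =
  fixes \<psi>\<^sub>x \<psi>\<^sub>y \<eta> N \<eta>\<^sub>x \<eta>\<^sub>y :: L4 and l u hx hy a11 a12 a22 :: real
  assumes pos: "l > 0" "u > 0"
    and conformal: "lor \<psi>\<^sub>x \<psi>\<^sub>x = l" "lor \<psi>\<^sub>y \<psi>\<^sub>y = l" "lor \<psi>\<^sub>x \<psi>\<^sub>y = 0"
    and normal: "lor \<eta> \<eta> = 1" "lor \<eta> \<psi>\<^sub>x = 0" "lor \<eta> \<psi>\<^sub>y = 0" "lor \<eta> N = 0"
    and position: "lor N N = -1" "lor \<psi>\<^sub>x N = 0" "lor \<psi>\<^sub>y N = 0" "N $ 3 = 0"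
    and heights: "\<psi>\<^sub>x $ 3 = hx" "\<psi>\<^sub>y $ 3 = hy" "\<eta> $ 3 = u"
    and normal_derivatives: "lor \<eta>\<^sub>x \<eta> = 0" "lor \<eta>\<^sub>y \<eta> = 0"
      "lor \<eta>\<^sub>x N = - lor \<eta> (vproj \<psi>\<^sub>x)" "lor \<eta>\<^sub>y N = - lor \<eta> (vproj \<psi>\<^sub>y)"
    and shape: "lor \<eta>\<^sub>x \<psi>\<^sub>x = a11" "lor \<eta>\<^sub>x \<psi>\<^sub>y = a12" "lor \<eta>\<^sub>y \<psi>\<^sub>x = a12" "lor \<eta>\<^sub>y \<psi>\<^sub>y = a22"
    and mean_curvature: "a11 + a22 = - l"
begin

abbreviation "psharp\<^sub>x \<equiv> psharp_deriv \<eta> N u \<psi>\<^sub>x \<eta>\<^sub>x"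
abbreviation "psharp\<^sub>y \<equiv> psharp_deriv \<eta> N u \<psi>\<^sub>y \<eta>\<^sub>y"
abbreviation "\<eta>sharp\<^sub>x \<equiv> normal_sharp_deriv \<eta> N u \<psi>\<^sub>x \<eta>\<^sub>x"
abbreviation "\<eta>sharp\<^sub>y \<equiv> normal_sharp_deriv \<eta> N u \<psi>\<^sub>y \<eta>\<^sub>y"

lemma nonzero: "l \<noteq> 0" "u \<noteq> 0"
  using pos by simp_all

lemma frame_products:
  "lor \<psi>\<^sub>x \<psi>\<^sub>x = l" "lor \<psi>\<^sub>y \<psi>\<^sub>y = l" "lor \<psi>\<^sub>x \<psi>\<^sub>y = 0" "lor \<eta> \<eta> = 1"
  "lor \<eta> \<psi>\<^sub>x = 0" "lor \<eta> \<psi>\<^sub>y = 0" "lor \<eta> N = 0"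
  "lor N N = -1" "lor \<psi>\<^sub>x N = 0" "lor \<psi>\<^sub>y N = 0"
  "lor \<eta>\<^sub>x \<psi>\<^sub>x = a11" "lor \<eta>\<^sub>x \<psi>\<^sub>y = a12" "lor \<eta>\<^sub>y \<psi>\<^sub>x = a12" "lor \<eta>\<^sub>y \<psi>\<^sub>y = a22"
  "lor \<eta>\<^sub>x \<eta> = 0" "lor \<eta>\<^sub>y \<eta> = 0" "lor \<eta>\<^sub>x N = u * hx" "lor \<eta>\<^sub>y N = u * hy"
  using conformal normal position shape normal_derivatives
  by (simp_all add: lor_vproj_right heights)

lemma frame_products_swapped:
  "lor \<psi>\<^sub>y \<psi>\<^sub>x = 0" "lor \<psi>\<^sub>x \<eta> = 0" "lor \<psi>\<^sub>y \<eta> = 0" "lor N \<eta> = 0"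
  "lor N \<psi>\<^sub>x = 0" "lor N \<psi>\<^sub>y = 0"
  "lor \<psi>\<^sub>x \<eta>\<^sub>x = a11" "lor \<psi>\<^sub>y \<eta>\<^sub>x = a12" "lor \<psi>\<^sub>x \<eta>\<^sub>y = a12" "lor \<psi>\<^sub>y \<eta>\<^sub>y = a22"
  "lor \<eta> \<eta>\<^sub>x = 0" "lor \<eta> \<eta>\<^sub>y = 0" "lor N \<eta>\<^sub>x = u * hx" "lor N \<eta>\<^sub>y = u * hy"
  using frame_products by (simp_all add: lor_commute)

definition frame :: "real \<Rightarrow> real \<Rightarrow> real \<Rightarrow> real \<Rightarrow> L4" where
  "frame c1 c2 c3 c4 = c1 *\<^sub>R \<psi>\<^sub>x + c2 *\<^sub>R \<psi>\<^sub>y + c3 *\<^sub>R \<eta> + c4 *\<^sub>R N"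

lemma lor_frame_left:
  "lor (frame c1 c2 c3 c4) v = c1 * lor \<psi>\<^sub>x v + c2 * lor \<psi>\<^sub>y v + c3 * lor \<eta> v + c4 * lor N v"
  by (simp add: frame_def)

lemma lor_frame:
  "lor (frame a1 a2 a3 a4) (frame b1 b2 b3 b4) = l * (a1 * b1 + a2 * b2) + a3 * b3 - a4 * b4"
  by (simp add: frame_def frame_products frame_products_swapped algebra_simps)

lemma frame_nth_3: "frame a1 a2 a3 a4 $ 3 = a1 * hx + a2 * hy + a3 * u"
  by (simp add: frame_def heights position)

lemma frame_expansion: "v = frame (lor v \<psi>\<^sub>x / l) (lor v \<psi>\<^sub>y / l) (lor v \<eta>) (- lor v N)"
  using lor_orthogonal_expansion[of \<psi>\<^sub>x \<psi>\<^sub>y \<eta> N v] pos frame_products frame_products_swapped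
  by (simp add: frame_def)

lemma frame_eqI:
  assumes "lor v \<psi>\<^sub>x = l * c1" "lor v \<psi>\<^sub>y = l * c2" "lor v \<eta> = c3" "lor v N = - c4"
  shows "v = frame c1 c2 c3 c4"
  using frame_expansion[of v] assms pos by simp

lemma e3_frame: "e3 = frame (hx / l) (hy / l) u 0"
  using frame_expansion[of e3] by (simp add: heights position lor_commute[of e3])

lemma heights_sq: "hx\<^sup>2 + hy\<^sup>2 = l * (1 - u\<^sup>2)"
proof -
  have "lor e3 e3 = 1"
    unfolding lor_e3 by (simp add: e3_def)
  then have "l * ((hx / l)\<^sup>2 + (hy / l)\<^sup>2) + u\<^sup>2 = 1"
    by (simp add: e3_frame lor_frame power2_eq_square)
  then have "l * (hx\<^sup>2 + hy\<^sup>2) = l * (l * (1 - u\<^sup>2))"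
    using pos by (simp add: field_simps power2_eq_square)
  then show ?thesis
    using pos by simp
qed

lemma normal_partials_frame:
  "\<eta>\<^sub>x = frame (a11 / l) (a12 / l) 0 (- u * hx)"
  "\<eta>\<^sub>y = frame (a12 / l) (a22 / l) 0 (- u * hy)"
  using frame_expansion[of \<eta>\<^sub>x] frame_expansion[of \<eta>\<^sub>y] by (simp_all add: frame_products)

lemma normal_partials_nth_3:
  "\<eta>\<^sub>x $ 3 = (a11 * hx + a12 * hy) / l" "\<eta>\<^sub>y $ 3 = (a12 * hx + a22 * hy) / l"
  by (simp_all add: normal_partials_frame frame_nth_3 add_divide_distrib)

lemmas frame_simps = frame_products frame_products_swapped heights normal_partials_nth_3 position(4) lor_vproj_left

text \<open>\<open>Complex q1 q2\<close> is the Abresch-Rosenberg differential \<open>Q\<close> at the point (lemma \<open>ARQ_at\<close>).\<close>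

definition q1 :: real where
  "q1 = (a22 - a11 + hx\<^sup>2 - hy\<^sup>2) / 4"

definition q2 :: real where
  "q2 = (a12 - hx * hy) / 2"

definition lam_sharp :: real where
  "lam_sharp = 16 * (q1\<^sup>2 + q2\<^sup>2) / (l * u ^ 4)"

lemma q_relations: "4 * q1 = a22 - a11 + hx\<^sup>2 - hy\<^sup>2" "2 * q2 = a12 - hx * hy"
  by (simp_all add: q1_def q2_def)

lemma psharp_x_frame:
  "psharp\<^sub>x = frame (- 4 * q1 / (u\<^sup>2 * l)) (4 * q2 / (u\<^sup>2 * l))
     (8 * (q1 * hx - q2 * hy) / (u ^ 3 * l)) (8 * (q1 * hx - q2 * hy) / (u ^ 3 * l))"
  by (intro frame_eqI; simp add: psharp_deriv_def frame_simps q1_def q2_def field_simps nonzero)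
    (use heights_sq mean_curvature in algebra)+

lemma psharp_y_frame:
  "psharp\<^sub>y = frame (4 * q2 / (u\<^sup>2 * l)) (4 * q1 / (u\<^sup>2 * l))
     (- 8 * (q2 * hx + q1 * hy) / (u ^ 3 * l)) (- 8 * (q2 * hx + q1 * hy) / (u ^ 3 * l))"
  by (intro frame_eqI; simp add: psharp_deriv_def frame_simps q1_def q2_def field_simps nonzero)
    (use heights_sq mean_curvature in algebra)+

definition Nsharp :: L4 where
  "Nsharp = - N + (2 / u\<^sup>2) *\<^sub>R (vproj \<eta> + N)"

definition \<eta>sharp :: L4 where
  "\<eta>sharp = \<eta> + N - Nsharp"

lemma Nsharp_frame:
  "Nsharp = frame (- 2 * hx / (u * l)) (- 2 * hy / (u * l)) (2 * (1 - u\<^sup>2) / u\<^sup>2) (2 / u\<^sup>2 - 1)"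
  by (intro frame_eqI; simp add: Nsharp_def frame_simps; simp add: field_simps nonzero power2_eq_square)

lemma eta_sharp_frame:
  "\<eta>sharp = frame (2 * hx / (u * l)) (2 * hy / (u * l)) (1 - 2 * (1 - u\<^sup>2) / u\<^sup>2) (2 - 2 / u\<^sup>2)"
  by (intro frame_eqI; simp add: \<eta>sharp_def Nsharp_frame lor_frame_left frame_simps)

lemma psharp_conformal:
  "lor psharp\<^sub>x psharp\<^sub>x = lam_sharp" "lor psharp\<^sub>y psharp\<^sub>y = lam_sharp" "lor psharp\<^sub>x psharp\<^sub>y = 0"
  unfolding psharp_x_frame psharp_y_frame lor_frame lam_sharp_def
  by (simp_all add: field_simps nonzero power2_eq_square) algebra+

lemma eta_sharp_normal:
  "lor \<eta>sharp \<eta>sharp = 1" "lor \<eta>sharp psharp\<^sub>x = 0" "lor \<eta>sharp psharp\<^sub>y = 0" "lor \<eta>sharp Nsharp = 0"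
  unfolding eta_sharp_frame psharp_x_frame psharp_y_frame Nsharp_frame lor_frame
  by (simp_all add: field_simps nonzero) (use heights_sq in algebra)+

lemma Nsharp_hyperbolic: "lor Nsharp Nsharp = -1" "lor Nsharp N < 0"
proof -
  show "lor Nsharp Nsharp = -1"
    unfolding Nsharp_frame lor_frame
    by (simp add: field_simps nonzero) (use heights_sq in algebra)
  have "0 \<le> l * (1 - u\<^sup>2)"
    using heights_sq by (metis add_nonneg_nonneg zero_le_power2)
  then have "u\<^sup>2 \<le> 1"
    using pos by (simp add: zero_le_mult_iff)
  then show "lor Nsharp N < 0"
    using pos by (simp add: Nsharp_def frame_simps field_simps)
qed

lemma eta_sharp_mean_curvature: "- (lor psharp\<^sub>x \<eta>sharp\<^sub>x + lor psharp\<^sub>y \<eta>sharp\<^sub>y) = lam_sharp"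
proof -
  have tangential:
    "lor psharp\<^sub>x (\<eta>\<^sub>x + vproj \<psi>\<^sub>x) + lor psharp\<^sub>y (\<eta>\<^sub>y + vproj \<psi>\<^sub>y) = u\<^sup>2 * lam_sharp"
    unfolding psharp_x_frame psharp_y_frame lor_frame_left lam_sharp_def
    by (simp add: frame_simps lor_vproj_right; simp add: field_simps nonzero)
      (use q_relations in algebra)
  have vertical: "(psharp\<^sub>x $ 3)\<^sup>2 + (psharp\<^sub>y $ 3)\<^sup>2 = (1 - u\<^sup>2) * lam_sharp"
    unfolding psharp_x_frame psharp_y_frame frame_nth_3 lam_sharp_def
    by (simp add: field_simps nonzero) (use heights_sq in algebra)
  show ?thesis
    using tangential vertical psharp_conformal(1,2)
    by (simp add: normal_sharp_deriv_def lor_vproj_right power2_eq_square algebra_simps)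
qed

end

section \<open>The immersion \<open>\<psi>\<^sup>#\<close>\<close>

text \<open>The normal of \<open>\<psi>\<^sup>#\<close> is forced by requiring angle \<open>u\<close> and Gauss map \<open>G\<close>:
  \<open>\<eta>\<^sup># = u (G, 1) - vproj \<psi>\<^sup>#\<close>.\<close>

definition normal_sharp :: "(complex \<Rightarrow> L4) \<Rightarrow> (complex \<Rightarrow> L4) \<Rightarrow> complex \<Rightarrow> L4" where
  "normal_sharp \<psi> \<eta> z = angle \<eta> z *\<^sub>R hgauss1 \<psi> \<eta> z - vproj (psharp \<psi> \<eta> z)"

lemma psharp_eq: "psharp \<psi> \<eta> z = - \<psi> z + (2 / (angle \<eta> z)\<^sup>2) *\<^sub>R (\<eta> z + vproj (\<psi> z))"
  by (simp add: psharp_def hgauss1_def power2_eq_square)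

lemma normal_sharp_eq:
  "angle \<eta> z \<noteq> 0 \<Longrightarrow> normal_sharp \<psi> \<eta> z = \<eta> z + vproj (\<psi> z) - vproj (psharp \<psi> \<eta> z)"
  by (simp add: normal_sharp_def hgauss1_def)

lemma angle_normal_sharp: "angle \<eta> z \<noteq> 0 \<Longrightarrow> angle (normal_sharp \<psi> \<eta>) z = angle \<eta> z"
  by (simp add: normal_sharp_eq angle_def)

lemma hgauss1_sharp:
  "angle \<eta> z \<noteq> 0 \<Longrightarrow> hgauss1 (psharp \<psi> \<eta>) (normal_sharp \<psi> \<eta>) z = hgauss1 \<psi> \<eta> z"
  by (simp add: hgauss1_def angle_normal_sharp normal_sharp_eq)

lemma has_derivative_two_over_square:
  fixes u :: "complex \<Rightarrow> real"
  assumes "(u has_derivative u') (at w)" "u w \<noteq> 0"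
  shows "((\<lambda>z. 2 / (u z)\<^sup>2) has_derivative (\<lambda>h. - 4 * u' h / (u w) ^ 3)) (at w)"
proof -
  have "((\<lambda>x. 2 / x\<^sup>2) has_real_derivative - 4 / (u w) ^ 3) (at (u w))"
    using assms(2) by (auto intro!: derivative_eq_intros simp: field_simps power2_eq_square power3_eq_cube)
  from has_derivative_compose[OF assms(1) this[unfolded has_field_derivative_def]] show ?thesis
    by (simp add: field_simps)
qed

lemma partials_psharp:
  assumes "\<psi> differentiable (at w)" "\<eta> differentiable (at w)" "angle \<eta> w \<noteq> 0"
  shows "psharp \<psi> \<eta> differentiable (at w)"
    "px (psharp \<psi> \<eta>) w = psharp_deriv (\<eta> w) (vproj (\<psi> w)) (angle \<eta> w) (px \<psi> w) (px \<eta> w)"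
    "py (psharp \<psi> \<eta>) w = psharp_deriv (\<eta> w) (vproj (\<psi> w)) (angle \<eta> w) (py \<psi> w) (py \<eta> w)"
proof -
  let ?P = "frechet_derivative \<psi> (at w)" and ?E = "frechet_derivative \<eta> (at w)"
  have P: "(\<psi> has_derivative ?P) (at w)" and E: "(\<eta> has_derivative ?E) (at w)"
    using assms(1,2) frechet_derivative_works by blast+
  have "((\<lambda>z. 2 / (angle \<eta> z)\<^sup>2) has_derivative (\<lambda>h. - 4 * ?E h $ 3 / (angle \<eta> w) ^ 3)) (at w)"
    using has_derivative_two_over_square[OF bounded_linear.has_derivative[OF bounded_linear_vec_nth E]]
      assms(3) by (simp add: angle_def)
  from has_derivative_add[OF has_derivative_minus[OF P] has_derivative_scaleR[OF this
        has_derivative_add[OF E bounded_linear.has_derivative[OF bounded_linear_vproj P]]]]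
  have D: "(psharp \<psi> \<eta> has_derivative (\<lambda>h. - ?P h + ((2 / (angle \<eta> w)\<^sup>2) *\<^sub>R (?E h + vproj (?P h))
      + (- 4 * ?E h $ 3 / (angle \<eta> w) ^ 3) *\<^sub>R (\<eta> w + vproj (\<psi> w))))) (at w)"
    by (simp add: psharp_eq[abs_def])
  then show "psharp \<psi> \<eta> differentiable (at w)"
    using differentiable_def by blast
  show "px (psharp \<psi> \<eta>) w = psharp_deriv (\<eta> w) (vproj (\<psi> w)) (angle \<eta> w) (px \<psi> w) (px \<eta> w)"
    "py (psharp \<psi> \<eta>) w = psharp_deriv (\<eta> w) (vproj (\<psi> w)) (angle \<eta> w) (py \<psi> w) (py \<eta> w)"
    using partials_eq_derivative[OF D] unfolding psharp_deriv_def
    by (simp_all add: partials_eq_frechet_derivative assms angle_def)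
qed

lemma smooth_upto_psharp:
  assumes "open S" "\<forall>z\<in>S. angle \<eta> z \<noteq> 0" "smooth_upto S n \<psi>" "smooth_upto S n \<eta>"
  shows "smooth_upto S n (psharp \<psi> \<eta>)"
proof -
  note add = smooth_upto_add[OF assms(1)] and lin = smooth_upto_linear[OF assms(1)]
    and bil = smooth_upto_bilinear[OF assms(1)]
  have "smooth_upto S n (\<lambda>z. inverse (angle \<eta> z))"
    using smooth_upto_inverse[OF assms(1,2)] lin[OF bounded_linear_vec_nth assms(4)]
    by (simp add: angle_def[abs_def])
  then have "smooth_upto S n (\<lambda>z. 2 * (inverse (angle \<eta> z) * inverse (angle \<eta> z)))"
    using lin[OF bounded_linear_mult_right bil[OF bounded_bilinear_mult]] by blast
  then have "smooth_upto S n (\<lambda>z. (2 / (angle \<eta> z)\<^sup>2) *\<^sub>R (\<eta> z + vproj (\<psi> z)))"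
    using bil[OF bounded_bilinear_scaleR _ add[OF assms(4) lin[OF bounded_linear_vproj assms(3)]]]
    by (simp add: power2_eq_square divide_inverse)
  then show ?thesis
    unfolding psharp_eq[abs_def]
    using add[OF lin[OF bounded_linear_minus[OF bounded_linear_ident] assms(3)]] by blast
qed

locale half_cmc_immersion =
  fixes S :: "complex set" and \<psi> \<eta> :: "complex \<Rightarrow> L4"
  assumes open_S: "open S"
    and immersion: "conformal_immersion S \<psi>"
    and smooth_normal: "smooth_on S \<eta>"
    and unit_normal: "unit_normal S \<psi> \<eta>"
    and angle_pos: "\<forall>z\<in>S. angle \<eta> z > 0"
    and mean_curvature_half: "\<forall>z\<in>S. meancurv \<psi> \<eta> z = 1/2"
    and ARQ_nonzero: "\<forall>z\<in>S. ARQ \<psi> \<eta> z \<noteq> 0"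
begin

lemma angle_nonzero: "z \<in> S \<Longrightarrow> angle \<eta> z \<noteq> 0"
  using angle_pos by fastforce

lemma smooth_upto_psi_eta: "smooth_upto S n \<psi>" "smooth_upto S n \<eta>"
  using immersion smooth_normal by (simp_all add: conformal_immersion_def smooth_on_iff_smooth_upto)

lemma differentiable_psi_eta:
  assumes "w \<in> S"
  shows "\<psi> differentiable (at w)" "\<eta> differentiable (at w)"
    "px \<psi> differentiable (at w)" "py \<psi> differentiable (at w)"
  using smooth_upto_differentiable[OF smooth_upto_psi_eta(1)] smooth_upto_differentiable[OF smooth_upto_psi_eta(2)]
    smooth_upto_differentiable[of S 0 "px \<psi>"] smooth_upto_differentiable[of S 0 "py \<psi>"]
    smooth_upto_psi_eta(1)[of 1] assms by (auto simp: smooth_upto_Suc)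

text \<open>The normal relations come from differentiating the constant products
  \<open>\<langle>N, N\<rangle>, \<langle>\<eta>, \<eta>\<rangle>, \<langle>\<eta>, N\<rangle>, \<langle>\<eta>, \<psi>\<^sub>x\<rangle>, \<langle>\<eta>, \<psi>\<^sub>y\<rangle>\<close>; the symmetry of \<open>a\<^sub>i\<^sub>j\<close> is
  that of \<open>\<psi>\<^sub>x\<^sub>y\<close>.\<close>

lemma half_cmc_frame_at:
  assumes w: "w \<in> S"
  shows "half_cmc_frame (px \<psi> w) (py \<psi> w) (\<eta> w) (vproj (\<psi> w)) (px \<eta> w) (py \<eta> w) (lam \<psi> w) (angle \<eta> w)
    (px \<psi> w $ 3) (py \<psi> w $ 3)
    (lor (px \<eta> w) (px \<psi> w)) (lor (px \<eta> w) (py \<psi> w)) (lor (py \<eta> w) (py \<psi> w))"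
proof -
  note S = open_S w
  note diff = differentiable_psi_eta[OF w]
  have N: "\<forall>v\<in>S. lor (vproj (\<psi> v)) (vproj (\<psi> v)) = -1"
    and imm: "lam \<psi> w > 0" "lor (py \<psi> w) (py \<psi> w) = lam \<psi> w" "lor (px \<psi> w) (py \<psi> w) = 0"
    using immersion w by (auto simp: conformal_immersion_def H2R_iff)
  have nu: "\<forall>v\<in>S. lor (\<eta> v) (\<eta> v) = 1" "\<forall>v\<in>S. lor (\<eta> v) (px \<psi> v) = 0"
    "\<forall>v\<in>S. lor (\<eta> v) (py \<psi> v) = 0" "\<forall>v\<in>S. lor (\<eta> v) (vproj (\<psi> v)) = 0"
    using unit_normal by (auto simp: unit_normal_def)
  note vp = partials_linear[OF bounded_linear_vproj diff(1)]
  have "lor (vproj (px \<psi> w)) (vproj (\<psi> w)) = 0" "lor (vproj (py \<psi> w)) (vproj (\<psi> w)) = 0"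
    using lor_const_partials[OF S N vp(1) vp(1)] by (simp_all add: vp(2,3) lor_commute)
  then have XN: "lor (px \<psi> w) (vproj (\<psi> w)) = 0" "lor (py \<psi> w) (vproj (\<psi> w)) = 0"
    by (simp_all add: lor_vproj_left lor_vproj_right)
  have E: "lor (px \<eta> w) (\<eta> w) = 0" "lor (py \<eta> w) (\<eta> w) = 0"
    using lor_const_partials[OF S nu(1) diff(2) diff(2)] by (simp_all add: lor_commute)
  have EN: "lor (px \<eta> w) (vproj (\<psi> w)) = - lor (\<eta> w) (vproj (px \<psi> w))"
    "lor (py \<eta> w) (vproj (\<psi> w)) = - lor (\<eta> w) (vproj (py \<psi> w))"
    using lor_const_partials[OF S nu(4) diff(2) vp(1)] by (simp_all add: vp(2,3) eq_neg_iff_add_eq_0)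
  have shape_sym: "lor (py \<eta> w) (px \<psi> w) = lor (px \<eta> w) (py \<psi> w)"
    using lor_const_partials(2)[OF S nu(2) diff(2) diff(3)] lor_const_partials(1)[OF S nu(3) diff(2) diff(4)]
      py_px_eq_px_py[OF S smooth_upto_psi_eta(1)] by simp
  have "lor (px (px \<psi>) w) (\<eta> w) + lor (py (py \<psi>) w) (\<eta> w) = lam \<psi> w"
    using mean_curvature_half[rule_format, OF w] imm(1) by (simp add: meancurv_def field_simps)
  then have H: "lor (px \<eta> w) (px \<psi> w) + lor (py \<eta> w) (py \<psi> w) = - lam \<psi> w"
    using lor_const_partials(1)[OF S nu(2) diff(2) diff(3)] lor_const_partials(2)[OF S nu(3) diff(2) diff(4)]
    by (simp add: lor_commute)
  show ?thesis
    using imm nu w angle_pos XN E EN shape_sym H N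
    by unfold_locales (auto simp: lam_def angle_def lor_commute)
qed

lemma normal_sharp_on_S:
  "\<forall>z\<in>S. normal_sharp \<psi> \<eta> z = (\<eta> z + vproj (\<psi> z)) + - vproj (psharp \<psi> \<eta> z)"
  by (simp add: normal_sharp_eq angle_nonzero)

lemma smooth_upto_sharp: "smooth_upto S n (psharp \<psi> \<eta>)" "smooth_upto S n (normal_sharp \<psi> \<eta>)"
proof -
  show psharp: "smooth_upto S n (psharp \<psi> \<eta>)" for n
    using smooth_upto_psharp[OF open_S _ smooth_upto_psi_eta] angle_nonzero by blast
  have "smooth_upto S n (\<lambda>z. (\<eta> z + vproj (\<psi> z)) + - vproj (psharp \<psi> \<eta> z))"
    using smooth_upto_add[OF open_S smooth_upto_add[OF open_S smooth_upto_psi_eta(2)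
          smooth_upto_linear[OF open_S bounded_linear_vproj smooth_upto_psi_eta(1)]]
        smooth_upto_linear[OF open_S bounded_linear_minus[OF bounded_linear_vproj] psharp]] .
  then show "smooth_upto S n (normal_sharp \<psi> \<eta>)"
    by (rule smooth_upto_cong[OF open_S normal_sharp_on_S])
qed

lemma partials_normal_sharp:
  assumes w: "w \<in> S"
  shows "px (normal_sharp \<psi> \<eta>) w = normal_sharp_deriv (\<eta> w) (vproj (\<psi> w)) (angle \<eta> w) (px \<psi> w) (px \<eta> w)"
    "py (normal_sharp \<psi> \<eta>) w = normal_sharp_deriv (\<eta> w) (vproj (\<psi> w)) (angle \<eta> w) (py \<psi> w) (py \<eta> w)"
proof -
  note diff = differentiable_psi_eta[OF w]
  note sharp = partials_psharp[OF diff(1,2) angle_nonzero[OF w]]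
  note A = partials_add[OF diff(2) partials_linear(1)[OF bounded_linear_vproj diff(1)]]
  note B = partials_linear[OF bounded_linear_minus[OF bounded_linear_vproj] sharp(1)]
  note AB = partials_add[OF A(1) B(1)]
  show "px (normal_sharp \<psi> \<eta>) w = normal_sharp_deriv (\<eta> w) (vproj (\<psi> w)) (angle \<eta> w) (px \<psi> w) (px \<eta> w)"
    "py (normal_sharp \<psi> \<eta>) w = normal_sharp_deriv (\<eta> w) (vproj (\<psi> w)) (angle \<eta> w) (py \<psi> w) (py \<eta> w)"
    using partials_cong_open(2,3)[OF open_S w normal_sharp_on_S AB(1)] AB(2,3) A(2,3) B(2,3) sharp(2,3)
      partials_linear(2,3)[OF bounded_linear_vproj diff(1)]
    by (simp_all add: normal_sharp_deriv_def)
qed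

lemma ARQ_at:
  assumes w: "w \<in> S"
  shows "ARQ \<psi> \<eta> w = Complex
    ((lor (py \<eta> w) (py \<psi> w) - lor (px \<eta> w) (px \<psi> w) + (px \<psi> w $ 3)\<^sup>2 - (py \<psi> w $ 3)\<^sup>2) / 4)
    ((lor (px \<eta> w) (py \<psi> w) - px \<psi> w $ 3 * py \<psi> w $ 3) / 2)"
proof -
  have heights: "px (\<lambda>v. height (\<psi> v)) w = px \<psi> w $ 3" "py (\<lambda>v. height (\<psi> v)) w = py \<psi> w $ 3"
    using partials_linear(2,3)[OF bounded_linear_vec_nth differentiable_psi_eta(1)[OF w]]
    by (simp_all add: height_def)
  have shape_sym: "lor (py \<eta> w) (px \<psi> w) = lor (px \<eta> w) (py \<psi> w)"
    using half_cmc_frame.shape(3)[OF half_cmc_frame_at[OF w]] .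
  have H: "meancurv \<psi> \<eta> w = 1/2"
    using mean_curvature_half w by blast
  show ?thesis
    by (simp add: ARQ_def pfun_def lorC_def dz_def dzr_def complex_eq_iff heights shape_sym H
        lor_commute[of "py \<psi> w"] lor_commute[of "px \<psi> w"] power2_eq_square field_simps)
qed

lemma sharp_at:
  assumes w: "w \<in> S"
  defines "L \<equiv> 16 * (cmod (ARQ \<psi> \<eta> w))\<^sup>2 / (lam \<psi> w * (angle \<eta> w) ^ 4)"
  shows "lor (px (psharp \<psi> \<eta>) w) (px (psharp \<psi> \<eta>) w) = L"
    "lor (py (psharp \<psi> \<eta>) w) (py (psharp \<psi> \<eta>) w) = L"
    "lor (px (psharp \<psi> \<eta>) w) (py (psharp \<psi> \<eta>) w) = 0"
    "lor (normal_sharp \<psi> \<eta> w) (normal_sharp \<psi> \<eta> w) = 1"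
    "lor (normal_sharp \<psi> \<eta> w) (px (psharp \<psi> \<eta>) w) = 0"
    "lor (normal_sharp \<psi> \<eta> w) (py (psharp \<psi> \<eta>) w) = 0"
    "lor (normal_sharp \<psi> \<eta> w) (vproj (psharp \<psi> \<eta> w)) = 0"
    "- (lor (px (psharp \<psi> \<eta>) w) (px (normal_sharp \<psi> \<eta>) w)
        + lor (py (psharp \<psi> \<eta>) w) (py (normal_sharp \<psi> \<eta>) w)) = L"
proof -
  interpret F: half_cmc_frame "px \<psi> w" "py \<psi> w" "\<eta> w" "vproj (\<psi> w)" "px \<eta> w" "py \<eta> w"
    "lam \<psi> w" "angle \<eta> w" "px \<psi> w $ 3" "py \<psi> w $ 3"
    "lor (px \<eta> w) (px \<psi> w)" "lor (px \<eta> w) (py \<psi> w)" "lor (py \<eta> w) (py \<psi> w)"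
    by (rule half_cmc_frame_at[OF w])
  have L: "L = F.lam_sharp"
    unfolding L_def F.lam_sharp_def F.q1_def F.q2_def ARQ_at[OF w]
    by (simp add: complex_norm)
  have Nsharp: "vproj (psharp \<psi> \<eta> w) = F.Nsharp"
    by (simp add: psharp_eq F.Nsharp_def)
  have \<eta>sharp: "normal_sharp \<psi> \<eta> w = F.\<eta>sharp"
    by (simp add: normal_sharp_eq angle_nonzero[OF w] Nsharp F.\<eta>sharp_def)
  note partials = partials_psharp(2,3)[OF differentiable_psi_eta(1,2)[OF w] angle_nonzero[OF w]]
  show "lor (px (psharp \<psi> \<eta>) w) (px (psharp \<psi> \<eta>) w) = L"
    "lor (py (psharp \<psi> \<eta>) w) (py (psharp \<psi> \<eta>) w) = L"
    "lor (px (psharp \<psi> \<eta>) w) (py (psharp \<psi> \<eta>) w) = 0"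
    unfolding partials L by (rule F.psharp_conformal)+
  show "lor (normal_sharp \<psi> \<eta> w) (normal_sharp \<psi> \<eta> w) = 1"
    "lor (normal_sharp \<psi> \<eta> w) (px (psharp \<psi> \<eta>) w) = 0"
    "lor (normal_sharp \<psi> \<eta> w) (py (psharp \<psi> \<eta>) w) = 0"
    "lor (normal_sharp \<psi> \<eta> w) (vproj (psharp \<psi> \<eta> w)) = 0"
    unfolding partials \<eta>sharp Nsharp by (rule F.eta_sharp_normal)+
  show "- (lor (px (psharp \<psi> \<eta>) w) (px (normal_sharp \<psi> \<eta>) w)
        + lor (py (psharp \<psi> \<eta>) w) (py (normal_sharp \<psi> \<eta>) w)) = L"
    unfolding partials partials_normal_sharp[OF w] L by (rule F.eta_sharp_mean_curvature)
qed

lemma psharp_in_H2R: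
  assumes w: "w \<in> S"
  shows "psharp \<psi> \<eta> w \<in> H2R"
proof -
  interpret F: half_cmc_frame "px \<psi> w" "py \<psi> w" "\<eta> w" "vproj (\<psi> w)" "px \<eta> w" "py \<eta> w"
    "lam \<psi> w" "angle \<eta> w" "px \<psi> w $ 3" "py \<psi> w $ 3"
    "lor (px \<eta> w) (px \<psi> w)" "lor (px \<eta> w) (py \<psi> w)" "lor (py \<eta> w) (py \<psi> w)"
    by (rule half_cmc_frame_at[OF w])
  have Nsharp: "vproj (psharp \<psi> \<eta> w) = F.Nsharp"
    by (simp add: psharp_eq F.Nsharp_def)
  have "vproj (\<psi> w) $ 0 > 0"
    using immersion w by (simp add: conformal_immersion_def H2R_iff)
  then have "F.Nsharp $ 0 > 0"
    using lor_timelike_same_cone[of "vproj (\<psi> w)" F.Nsharp] F.position(1) F.Nsharp_hyperbolic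
    by (simp add: lor_commute)
  then show ?thesis
    using F.Nsharp_hyperbolic(1) by (simp add: H2R_iff Nsharp)
qed

lemma lam_psharp:
  assumes "z \<in> S"
  shows "lam (psharp \<psi> \<eta>) z = 16 * (cmod (ARQ \<psi> \<eta> z))\<^sup>2 / (lam \<psi> z * (angle \<eta> z) ^ 4)"
    and "lam (psharp \<psi> \<eta>) z > 0"
proof -
  show lam: "lam (psharp \<psi> \<eta>) z = 16 * (cmod (ARQ \<psi> \<eta> z))\<^sup>2 / (lam \<psi> z * (angle \<eta> z) ^ 4)"
    using sharp_at(1)[OF assms] by (simp add: lam_def)
  have "lam \<psi> z > 0" "angle \<eta> z > 0" "ARQ \<psi> \<eta> z \<noteq> 0"
    using immersion angle_pos ARQ_nonzero assms by (auto simp: conformal_immersion_def)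
  then show "lam (psharp \<psi> \<eta>) z > 0"
    unfolding lam by (intro divide_pos_pos mult_pos_pos) simp_all
qed

lemma conformal_immersion_psharp: "conformal_immersion S (psharp \<psi> \<eta>)"
  unfolding conformal_immersion_def smooth_on_iff_smooth_upto
  using smooth_upto_sharp(1) sharp_at(1-3) psharp_in_H2R lam_psharp(2) by (simp add: lam_def)

lemma unit_normal_sharp: "unit_normal S (psharp \<psi> \<eta>) (normal_sharp \<psi> \<eta>)"
  unfolding unit_normal_def using sharp_at(4-7) by blast

lemma meancurv_sharp:
  assumes z: "z \<in> S"
  shows "meancurv (psharp \<psi> \<eta>) (normal_sharp \<psi> \<eta>) z = 1/2"
proof -
  have tangent: "\<forall>v\<in>S. lor (px (psharp \<psi> \<eta>) v) (normal_sharp \<psi> \<eta> v) = 0"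
    "\<forall>v\<in>S. lor (py (psharp \<psi> \<eta>) v) (normal_sharp \<psi> \<eta> v) = 0"
    using sharp_at(5,6) by (simp_all add: lor_commute)
  have diff: "px (psharp \<psi> \<eta>) differentiable (at z)" "py (psharp \<psi> \<eta>) differentiable (at z)"
    "normal_sharp \<psi> \<eta> differentiable (at z)"
    using smooth_upto_sharp[of 1] z by (auto intro: smooth_upto_differentiable simp: smooth_upto_Suc)
  have "lor (px (px (psharp \<psi> \<eta>)) z) (normal_sharp \<psi> \<eta> z)
      + lor (py (py (psharp \<psi> \<eta>)) z) (normal_sharp \<psi> \<eta> z) = lam (psharp \<psi> \<eta>) z"
    using lor_const_partials(1)[OF open_S z tangent(1) diff(1,3)]
      lor_const_partials(2)[OF open_S z tangent(2) diff(2,3)] sharp_at(1,8)[OF z]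
    by (simp add: lam_def)
  then show ?thesis
    using lam_psharp(2)[OF z] by (simp add: meancurv_def)
qed

end

theorem mainTheorem11:
  fixes S :: "complex set" and \<psi> \<eta> :: "complex \<Rightarrow> real ^ 4"
  assumes "open S"
    and "conformal_immersion S \<psi>"
    and "smooth_on S \<eta>"
    and "unit_normal S \<psi> \<eta>"
    and "\<forall>z\<in>S. angle \<eta> z > 0"
    and "\<forall>z\<in>S. meancurv \<psi> \<eta> z = 1/2"
    and "\<forall>z\<in>S. ARQ \<psi> \<eta> z \<noteq> 0"
  shows "(\<forall>z\<in>S. psharp \<psi> \<eta> z = - \<psi> z + (2 / (angle \<eta> z)^2) *\<^sub>R (\<eta> z + vproj (\<psi> z)))
    \<and> conformal_immersion S (psharp \<psi> \<eta>)
    \<and> (\<exists>\<eta>s. smooth_on S \<eta>s \<and> unit_normal S (psharp \<psi> \<eta>) \<eta>s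
         \<and> (\<forall>z\<in>S. angle \<eta>s z = angle \<eta> z
                 \<and> meancurv (psharp \<psi> \<eta>) \<eta>s z = 1/2
                 \<and> hgauss1 (psharp \<psi> \<eta>) \<eta>s z = hgauss1 \<psi> \<eta> z))
    \<and> (\<forall>z\<in>S. lam (psharp \<psi> \<eta>) z
               = 16 * (cmod (ARQ \<psi> \<eta> z))^2 / (lam \<psi> z * (angle \<eta> z)^4))"
proof -
  interpret half_cmc_immersion S \<psi> \<eta>
    using assms by unfold_locales
  have "smooth_on S (normal_sharp \<psi> \<eta>)"
    using smooth_upto_sharp(2) by (simp add: smooth_on_iff_smooth_upto)
  then show ?thesis
    using psharp_eq conformal_immersion_psharp unit_normal_sharp angle_normal_sharp hgauss1_sharp
      meancurv_sharp lam_psharp(1) angle_nonzero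
    by (intro conjI exI[of _ "normal_sharp \<psi> \<eta>"]) auto
qed

end
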